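(* Let $\mathcal{M}$ be a circular embedding of a connected graph $X$ with $\ell$ edges on a closed orientable surface of genus $g$. Let $M$, $N$ be its arc-face and arc-tail incidence matrices and $U$ its vertex-face transition matrix. Then the $1$-eigenspace of $U$ is \[(\operatorname{col}(M)\cap\operatorname{col}(N))\oplus(\ker(M^T)\cap\ker(N^T)),\] and it has dimension $\ell+2g$. Moreover, $\operatorname{col}(M)\cap\operatorname{col}(N)=\operatorname{span}\{\mathbf{1}\}$, where $\mathbf{1}$ is the all-ones vector.
   Context: Setting. A circular embedding is a cellular embedding in which every face is bounded by a cycle. Arcs are ordered pairs $(u,v)$ with $\{u,v\}$ an edge, and $u$ is the tail; there are $2\ell$ arcs. Consistent orientation. Fix an orientation of all face boundaries such that each edge shared by two faces receives opposite directions in them. Then every arc lies in exactly one facial walk. Matrices. $M$ is the $2\ell\times s$ arc-face incidence matrix ($M_{(a,b),f}=1$ iff $(a,b)$ lies in the facial walk of $f$). $N$ is the $2\ell\times n$ arc-tail incidence matrix ($N_{(a,b),u}=1$ iff $a=u$). $\widehat M,\widehat N$ are these matrices with each column scaled to unit length. The vertex-face transition matrix is $U=(2\widehat M\widehat M^T-I)(2\widehat N\widehat N^T-I)$. *)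

theory Defs
  imports "HOL-Analysis.Analysis"
begin

text \<open>Arcs form a finite type 'a with reversal rv (the arc (u,v) is
sent to (v,u)) and tail map tail into the finite vertex type 'v.\<close>

definition simple_arc_graph :: "('a \<Rightarrow> 'a) \<Rightarrow> ('a \<Rightarrow> 'v) \<Rightarrow> bool" where
  "simple_arc_graph rv tail \<longleftrightarrow>
     (\<forall>a. rv (rv a) = a) \<and> (\<forall>a. tail (rv a) \<noteq> tail a) \<and>
     (\<forall>a b. tail a = tail b \<and> tail (rv a) = tail (rv b) \<longrightarrow> a = b)"

definition arc_graph_connected :: "('a \<Rightarrow> 'a) \<Rightarrow> ('a \<Rightarrow> 'v) \<Rightarrow> bool" where
  "arc_graph_connected rv tail \<longleftrightarrow>
     (\<forall>u v. (\<lambda>x y. \<exists>a. tail a = x \<and> tail (rv a) = y)\<^sup>*\<^sup>* u v)"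

definition rotation_system :: "('a \<Rightarrow> 'v) \<Rightarrow> ('a \<Rightarrow> 'a) \<Rightarrow> bool" where
  "rotation_system tail rho \<longleftrightarrow> bij rho \<and> (\<forall>a. tail (rho a) = tail a) \<and>
     (\<forall>a b. tail a = tail b \<longrightarrow> (\<exists>k. (rho ^^ k) a = b))"

text \<open>Face permutation: after arc (u,v) the facial walk continues with rho (v,u).\<close>
definition face_perm :: "('a \<Rightarrow> 'a) \<Rightarrow> ('a \<Rightarrow> 'a) \<Rightarrow> 'a \<Rightarrow> 'a" where
  "face_perm rv rho = rho \<circ> rv"

definition face_labelling :: "('a \<Rightarrow> 'a) \<Rightarrow> ('a \<Rightarrow> 'f) \<Rightarrow> bool" where
  "face_labelling phi fc \<longleftrightarrow> surj fc \<and> (\<forall>a b. fc a = fc b \<longleftrightarrow> (\<exists>k. (phi ^^ k) a = b))"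

text \<open>Circular: each facial walk is a cycle (distinct vertices, length at least 3).\<close>
definition circular_faces :: "('a \<Rightarrow> 'v) \<Rightarrow> ('a \<Rightarrow> 'f) \<Rightarrow> bool" where
  "circular_faces tail fc \<longleftrightarrow> (\<forall>a b. fc a = fc b \<and> tail a = tail b \<longrightarrow> a = b) \<and>
     (\<forall>f. 3 \<le> card {a. fc a = f})"

definition arc_face_matrix :: "('a::finite \<Rightarrow> 'f::finite) \<Rightarrow> real^'f^'a" where
  "arc_face_matrix fc = (\<chi> a f. if fc a = f then 1 else 0)"

definition arc_tail_matrix :: "('a::finite \<Rightarrow> 'v::finite) \<Rightarrow> real^'v^'a" where
  "arc_tail_matrix tail = (\<chi> a u. if tail a = u then 1 else 0)"

definition normalize_cols :: "real^'n^'m \<Rightarrow> real^'n^'m" where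
  "normalize_cols A = (\<chi> i j. A$i$j / norm (column j A))"

definition vf_transition_matrix :: "real^'f^'a \<Rightarrow> real^'v^'a \<Rightarrow> real^'a^'a" where
  "vf_transition_matrix M N =
     (let Mh = normalize_cols M; Nh = normalize_cols N in
      ((2::real) *\<^sub>R (Mh ** transpose Mh) - mat 1) ** ((2::real) *\<^sub>R (Nh ** transpose Nh) - mat 1))"

definition internal_direct_sum :: "'a::real_vector set \<Rightarrow> 'a set \<Rightarrow> 'a set \<Rightarrow> bool" where
  "internal_direct_sum E P Q \<longleftrightarrow> E = {x + y | x y. x \<in> P \<and> y \<in> Q} \<and> P \<inter> Q = {0}"

end

theory Submission
  imports Defs
begin

text \<open>Columns of \<open>M\<close> (and of \<open>N\<close>) have disjoint supports, so after normalisation they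
  are orthonormal and \<open>P = M' M'\<^sup>T\<close>, \<open>Q = N' N'\<^sup>T\<close> are the orthogonal projections onto
  \<open>col M\<close> and \<open>col N\<close>. As \<open>U = (2P - I)(2Q - I)\<close> is a product of two reflections, \<open>U x = x\<close>
  iff \<open>P x = Q x\<close>, and such an \<open>x\<close> splits as \<open>P x + (x - P x)\<close>, a vector fixed by both
  projections plus one annihilated by both. A vector in \<open>col M \<inter> col N\<close> is constant on
  faces and on vertex stars; since the face of an arc continues with a rotation of its reverse,
  it takes equal values on an arc and its reverse, hence is constant by connectivity. Counting
  dimensions, \<open>1 + (2l - (s + n - 1)) = l + 2g\<close> by Euler's formula.\<close>

definition orthogonal_nonzero_columns :: "real^'n^'m \<Rightarrow> bool" where
  "orthogonal_nonzero_columns A \<longleftrightarrow>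
     (\<forall>j. column j A \<noteq> 0) \<and> (\<forall>j k. j \<noteq> k \<longrightarrow> orthogonal (column j A) (column k A))"

lemma column_normalize_cols:
  "column j (normalize_cols A) = (1 / norm (column j A)) *\<^sub>R column j A"
  by (simp add: vec_eq_iff normalize_cols_def column_def)

lemma orthonormal_normalize_cols:
  assumes "orthogonal_nonzero_columns A"
  shows "transpose (normalize_cols A) ** normalize_cols A = mat 1"
proof -
  have "column j (normalize_cols A) \<bullet> column k (normalize_cols A) = (if j = k then 1 else 0)"
    for j k
    using assms unfolding orthogonal_nonzero_columns_def orthogonal_def
    by (auto simp: column_normalize_cols dot_square_norm power2_eq_square)
  then show ?thesis
    by (simp add: matrix_mult_transpose_dot_column mat_def vec_eq_iff)
qed

lemma span_columns_normalize_cols: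
  assumes "\<forall>j. column j A \<noteq> 0"
  shows "span (columns (normalize_cols A)) = span (columns A)"
proof -
  have "column j A \<in> span (columns (normalize_cols A))" for j
  proof -
    have "column j A = norm (column j A) *\<^sub>R column j (normalize_cols A)"
      using assms by (simp add: column_normalize_cols)
    moreover have "column j (normalize_cols A) \<in> span (columns (normalize_cols A))"
      by (auto simp: columns_def intro: span_base)
    ultimately show ?thesis
      by (metis span_mul)
  qed
  then have "columns A \<subseteq> span (columns (normalize_cols A))"
    by (auto simp: columns_def)
  moreover have "column j (normalize_cols A) \<in> span (columns A)" for j
    unfolding column_normalize_cols by (auto simp: columns_def intro: span_mul span_base)
  then have "columns (normalize_cols A) \<subseteq> span (columns A)"
    by (auto simp: columns_def)
  ultimately show ?thesis
    by (metis span_minimal span_subspace subspace_span)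
qed

lemma left_kernel_normalize_cols:
  assumes "\<forall>j. column j A \<noteq> 0"
  shows "{x. transpose (normalize_cols A) *v x = 0} = {x. transpose A *v x = 0}"
proof -
  have "(transpose (normalize_cols A) *v x) $ j = (transpose A *v x) $ j / norm (column j A)"
    for x j
    by (simp add: matrix_vector_mult_def transpose_def normalize_cols_def sum_divide_distrib)
  moreover have "norm (column j A) \<noteq> 0" for j
    using assms by simp
  ultimately show ?thesis
    unfolding set_eq_iff mem_Collect_eq vec_eq_iff zero_index
    by (simp del: transpose_matrix_vector)
qed

lemma transpose_mult_vec_component:
  "(transpose (A :: real^'n^'m) *v y) $ j = column j A \<bullet> y"
  by (simp add: matrix_vector_mult_def transpose_def column_def inner_vec_def mult.commute)

lemma left_kernel_eq_orthogonal_columns: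
  "{y. transpose (A :: real^'n^'m) *v y = 0} = {y. \<forall>c\<in>columns A. orthogonal c y}"
proof -
  have "transpose A *v y = 0 \<longleftrightarrow> (\<forall>j. column j A \<bullet> y = 0)" for y
    by (simp add: vec_eq_iff transpose_mult_vec_component del: transpose_matrix_vector)
  then show ?thesis
    by (auto simp: columns_def orthogonal_def)
qed

section \<open>Orthogonal projections\<close>

context
  fixes Q :: "real^'k^'n"
  assumes orthonormal: "transpose Q ** Q = mat 1"
begin

lemma projection_idempotent: "(Q ** transpose Q) ** (Q ** transpose Q) = Q ** transpose Q"
  by (metis orthonormal matrix_mul_assoc matrix_mul_rid)

lemma projection_fixed_points: "{x. (Q ** transpose Q) *v x = x} = span (columns Q)"
proof
  show "{x. (Q ** transpose Q) *v x = x} \<subseteq> span (columns Q)"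
    by (auto, metis matrix_vector_mul_assoc matrix_vector_mult_in_columnspace)
  show "span (columns Q) \<subseteq> {x. (Q ** transpose Q) *v x = x}"
  proof (rule span_minimal)
    show "subspace {x. (Q ** transpose Q) *v x = x}"
      by (auto simp: subspace_def matrix_vector_right_distrib matrix_vector_mult_scaleR)
    have "(Q ** transpose Q) *v column j Q = column j Q" for j
      using orthonormal
      by (simp add: matrix_vector_mult_basis[symmetric] matrix_vector_mul_assoc
          flip: matrix_mul_assoc)
    then show "columns Q \<subseteq> {x. (Q ** transpose Q) *v x = x}"
      by (auto simp: columns_def)
  qed
qed

lemma projection_kernel: "{x. (Q ** transpose Q) *v x = 0} = {x. transpose Q *v x = 0}"
proof (intro set_eqI iffI; simp only: mem_Collect_eq)
  fix x assume "(Q ** transpose Q) *v x = 0"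
  then have "transpose Q *v ((Q ** transpose Q) *v x) = 0" by simp
  then show "transpose Q *v x = 0"
    by (metis orthonormal matrix_mul_assoc matrix_mul_lid matrix_vector_mul_assoc)
qed (metis matrix_vector_mul_assoc matrix_vector_mult_0_right)

lemma dim_span_orthonormal_columns: "dim (span (columns Q)) = CARD('k)"
proof -
  have dot: "column j Q \<bullet> column k Q = (if j = k then 1 else 0)" for j k
    using orthonormal by (simp add: matrix_mult_transpose_dot_column mat_def vec_eq_iff)
  then have "inj (\<lambda>j. column j Q)"
    by (metis injI zero_neq_one)
  moreover have "independent (columns Q)"
    using dot by (intro pairwise_orthogonal_independent)
      (auto simp: pairwise_def orthogonal_def columns_def, metis inner_zero_left zero_neq_one)
  ultimately show ?thesis
    by (simp add: dim_eq_card_independent full_SetCompr_eq card_image columns_def)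
qed

end

section \<open>Products of two reflections\<close>

lemma fixed_points_reflection_product:
  fixes A B :: "real^'n^'n"
  assumes "A ** A = A" and "B ** B = B"
  shows "((2 *\<^sub>R A - mat 1) ** (2 *\<^sub>R B - mat 1)) *v x = x \<longleftrightarrow> A *v x = B *v x"
proof -
  define RA where "RA y = 2 *\<^sub>R (A *v y) - y" for y
  define RB where "RB y = 2 *\<^sub>R (B *v y) - y" for y
  have "A *v RA y = 2 *\<^sub>R (A *v (A *v y)) - A *v y" for y
    by (simp add: RA_def matrix_vector_mult_diff_distrib matrix_vector_mult_scaleR)
  also have "\<dots> y = A *v y" for y
    using assms(1) by (simp add: matrix_vector_mul_assoc scaleR_2)
  finally have "A *v RA y = A *v y" for y .
  then have involutive: "RA (RA y) = y" for y
    by (simp add: RA_def)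
  have "((2 *\<^sub>R A - mat 1) ** (2 *\<^sub>R B - mat 1)) *v x = RA (RB x)"
    by (simp add: RA_def RB_def flip: matrix_vector_mul_assoc
        add: matrix_vector_mult_diff_rdistrib scaleR_matrix_vector_assoc)
  also have "\<dots> = x \<longleftrightarrow> RB x = RA x"
    by (metis involutive)
  also have "\<dots> \<longleftrightarrow> A *v x = B *v x"
    by (auto simp: RA_def RB_def)
  finally show ?thesis .
qed

lemma internal_direct_sum_agreement_idempotents:
  fixes A B :: "real^'n^'n"
  assumes "A ** A = A" and "B ** B = B"
  shows "internal_direct_sum {x. A *v x = B *v x}
           {x. A *v x = x \<and> B *v x = x} {x. A *v x = 0 \<and> B *v x = 0}"
proof -
  have idA: "A *v (A *v x) = A *v x" and idB: "B *v (B *v x) = B *v x" for x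
    using assms by (simp_all add: matrix_vector_mul_assoc)
  have "x \<in> {y + z |y z. y \<in> {x. A *v x = x \<and> B *v x = x} \<and> z \<in> {x. A *v x = 0 \<and> B *v x = 0}}"
    if "A *v x = B *v x" for x
  proof -
    have "A *v (A *v x) = A *v x \<and> B *v (A *v x) = A *v x"
      using that idA idB by metis
    moreover have "A *v (x - A *v x) = 0 \<and> B *v (x - A *v x) = 0"
      using that idA idB by (simp add: matrix_vector_mult_diff_distrib) metis
    ultimately show ?thesis
      by (intro CollectI exI[of _ "A *v x"] exI[of _ "x - A *v x"]) simp
  qed
  then show ?thesis
    unfolding internal_direct_sum_def by (auto simp: matrix_vector_right_distrib)
qed

definition column_projection :: "real^'n^'m \<Rightarrow> real^'m^'m" where
  "column_projection A = normalize_cols A ** transpose (normalize_cols A)"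

lemma vf_transition_matrix_column_projection:
  "vf_transition_matrix M N
     = (2 *\<^sub>R column_projection M - mat 1) ** (2 *\<^sub>R column_projection N - mat 1)"
  by (simp add: vf_transition_matrix_def column_projection_def Let_def)

context
  fixes A :: "real^'n^'m"
  assumes A_cols: "orthogonal_nonzero_columns A"
begin

lemma column_projection_idempotent:
  "column_projection A ** column_projection A = column_projection A"
  using A_cols by (simp add: column_projection_def projection_idempotent orthonormal_normalize_cols)

lemma column_projection_fixed_points: "{x. column_projection A *v x = x} = span (columns A)"
  using A_cols
  by (simp add: column_projection_def projection_fixed_points orthonormal_normalize_cols
      span_columns_normalize_cols orthogonal_nonzero_columns_def)

lemma column_projection_kernel:
  "{x. column_projection A *v x = 0} = {x. transpose A *v x = 0}"
  using A_cols left_kernel_normalize_cols[of A]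
  by (simp add: column_projection_def projection_kernel orthonormal_normalize_cols
      orthogonal_nonzero_columns_def del: transpose_matrix_vector)

lemma dim_span_columns: "dim (span (columns A)) = CARD('n)"
  using dim_span_orthonormal_columns[OF orthonormal_normalize_cols[OF A_cols]] A_cols
  by (metis span_columns_normalize_cols orthogonal_nonzero_columns_def)

end

context
  fixes M :: "real^'f^'a" and N :: "real^'v^'a"
  assumes M_cols: "orthogonal_nonzero_columns M"
    and N_cols: "orthogonal_nonzero_columns N"
begin

lemma internal_direct_sum_fixed_vf_transition_matrix:
  "internal_direct_sum {x. vf_transition_matrix M N *v x = x}
     (span (columns M) \<inter> span (columns N))
     ({x. transpose M *v x = 0} \<inter> {x. transpose N *v x = 0})"
proof -
  let ?PM = "column_projection M" and ?PN = "column_projection N"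
  have "{x. vf_transition_matrix M N *v x = x} = {x. ?PM *v x = ?PN *v x}"
    using fixed_points_reflection_product[of ?PM ?PN] M_cols N_cols
    by (simp add: vf_transition_matrix_column_projection column_projection_idempotent)
  moreover have "span (columns M) \<inter> span (columns N) = {x. ?PM *v x = x \<and> ?PN *v x = x}"
    using M_cols N_cols by (auto simp flip: column_projection_fixed_points)
  moreover have "{x. transpose M *v x = 0} \<inter> {x. transpose N *v x = 0}
      = {x. ?PM *v x = 0 \<and> ?PN *v x = 0}"
    using M_cols N_cols by (auto simp del: transpose_matrix_vector simp flip: column_projection_kernel)
  ultimately show ?thesis
    using internal_direct_sum_agreement_idempotents[of ?PM ?PN] M_cols N_cols
    by (simp add: column_projection_idempotent)
qed

lemma dim_fixed_vf_transition_matrix: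
  "dim {x. vf_transition_matrix M N *v x = x} + CARD('f) + CARD('v)
     = CARD('a) + 2 * dim (span (columns M) \<inter> span (columns N))"
proof -
  define P where "P = span (columns M) \<inter> span (columns N)"
  define K where "K = {x. transpose M *v x = 0} \<inter> {x. transpose N *v x = 0}"
  define S where "S = span (columns M \<union> columns N)"
  have "subspace P" "subspace K"
    by (simp_all add: P_def K_def subspace_inter left_kernel_eq_orthogonal_columns
        subspace_orthogonal_to_vectors del: transpose_matrix_vector)
  with internal_direct_sum_fixed_vf_transition_matrix
  have "dim {x. vf_transition_matrix M N *v x = x} = dim P + dim K"
    using dim_sums_Int[OF \<open>subspace P\<close> \<open>subspace K\<close>]
    by (simp add: internal_direct_sum_def P_def K_def)
  moreover have "K = {y \<in> UNIV. \<forall>x\<in>S. orthogonal x y}"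
    unfolding K_def S_def left_kernel_eq_orthogonal_columns
    by (auto intro: orthogonal_to_span simp: orthogonal_commute) (meson UnI1 UnI2 span_base)+
  then have "dim K + dim S = CARD('a)"
    using dim_subspace_orthogonal_to_vectors[of S UNIV] by (simp add: S_def)
  moreover have "dim S + dim P = CARD('f) + CARD('v)"
    using dim_sums_Int[OF subspace_span subspace_span, of "columns M" "columns N"]
      dim_span_columns[OF M_cols] dim_span_columns[OF N_cols]
    by (simp add: S_def P_def span_Un)
  ultimately show ?thesis
    by (simp add: P_def)
qed

end

section \<open>Incidence matrices of a map\<close>

definition fibre_matrix :: "('a::finite \<Rightarrow> 'k::finite) \<Rightarrow> real^'k^'a" where
  "fibre_matrix h = (\<chi> a j. if h a = j then 1 else 0)"

lemma arc_face_matrix_eq_fibre_matrix: "arc_face_matrix = fibre_matrix"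
  and arc_tail_matrix_eq_fibre_matrix: "arc_tail_matrix = fibre_matrix"
  by (simp_all add: fun_eq_iff arc_face_matrix_def arc_tail_matrix_def fibre_matrix_def)

lemma column_fibre_matrix: "column j (fibre_matrix h) = (\<chi> a. if h a = j then 1 else 0)"
  by (simp add: column_def fibre_matrix_def)

lemma orthogonal_nonzero_columns_fibre_matrix:
  assumes "surj h"
  shows "orthogonal_nonzero_columns (fibre_matrix h)"
proof -
  have "column j (fibre_matrix h) \<noteq> 0" for j
    using surjD[OF assms, of j] by (auto simp: column_fibre_matrix vec_eq_iff)
  moreover have "orthogonal (column j (fibre_matrix h)) (column k (fibre_matrix h))"
    if "j \<noteq> k" for j k
    using that by (auto simp: orthogonal_def inner_vec_def column_fibre_matrix intro: sum.neutral)
  ultimately show ?thesis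
    by (simp add: orthogonal_nonzero_columns_def)
qed

lemma vec_1_in_span_columns_fibre_matrix: "vec 1 \<in> span (columns (fibre_matrix h))"
proof -
  have "vec 1 = (\<Sum>j\<in>UNIV. column j (fibre_matrix h))"
    by (simp add: vec_eq_iff column_fibre_matrix)
  also have "\<dots> \<in> span (columns (fibre_matrix h))"
    by (rule span_sum) (auto intro: span_base simp: columns_def)
  finally show ?thesis .
qed

lemma span_columns_fibre_matrix_constant:
  assumes "x \<in> span (columns (fibre_matrix h))" and "h a = h b"
  shows "x $ a = x $ b"
  using assms(1)
proof (induction rule: span_induct_alt)
  case (step c y z)
  then show ?case
    using assms(2) by (auto simp: columns_def column_fibre_matrix)
qed simp

section \<open>Vectors on the arcs of a connected graph\<close>

lemma surj_tail_if_connected: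
  assumes "arc_graph_connected rv tail"
  shows "surj tail"
proof -
  have "v \<in> range tail" for v
    using assms[unfolded arc_graph_connected_def, rule_format, of "tail undefined" v]
    by (cases rule: rtranclp.cases) auto
  then show ?thesis by auto
qed

lemma constant_if_connected:
  assumes "arc_graph_connected rv tail"
    and star: "\<And>a b. tail a = tail b \<Longrightarrow> \<phi> a = \<phi> b"
    and reverse: "\<And>a. \<phi> (rv a) = \<phi> a"
  shows "\<phi> a = \<phi> b"
proof -
  have "\<forall>a b. tail a = u \<longrightarrow> tail b = v \<longrightarrow> \<phi> a = \<phi> b" for u v
    using assms(1)[unfolded arc_graph_connected_def, rule_format, of u v]
  proof (induction rule: rtranclp_induct)
    case base
    then show ?case using star by metis
  next
    case (step w z)
    then obtain c where c: "tail c = w" "tail (rv c) = z" by blast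
    show ?case
    proof (intro allI impI)
      fix a b assume "tail a = u" "tail b = z"
      then have "\<phi> a = \<phi> c"
        using step.IH c by blast
      also have "\<dots> = \<phi> (rv c)"
        using reverse by simp
      also have "\<dots> = \<phi> b"
        using star c \<open>tail b = z\<close> by simp
      finally show "\<phi> a = \<phi> b" .
    qed
  qed
  then show ?thesis by blast
qed

lemma face_of_rotated_reverse:
  assumes "face_labelling (face_perm rv rho) fc"
  shows "fc (rho (rv a)) = fc a"
proof -
  have "(face_perm rv rho ^^ 1) a = rho (rv a)"
    by (simp add: face_perm_def)
  then show ?thesis
    using assms unfolding face_labelling_def by metis
qed

lemma span_columns_face_tail_Int:
  assumes "arc_graph_connected rv tail" and "rotation_system tail rho"
    and "face_labelling (face_perm rv rho) fc"
  shows "span (columns (fibre_matrix fc)) \<inter> span (columns (fibre_matrix tail)) = span {vec 1}"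
proof
  show "span {vec 1} \<subseteq> span (columns (fibre_matrix fc)) \<inter> span (columns (fibre_matrix tail))"
    using vec_1_in_span_columns_fibre_matrix[of fc] vec_1_in_span_columns_fibre_matrix[of tail]
    by (intro span_minimal) (auto simp: subspace_inter)
next
  show "span (columns (fibre_matrix fc)) \<inter> span (columns (fibre_matrix tail)) \<subseteq> span {vec 1}"
  proof
    fix x assume x: "x \<in> span (columns (fibre_matrix fc)) \<inter> span (columns (fibre_matrix tail))"
    have face: "x $ a = x $ b" if "fc a = fc b" for a b
      using x that by (meson IntD1 span_columns_fibre_matrix_constant)
    have star: "x $ a = x $ b" if "tail a = tail b" for a b
      using x that by (meson IntD2 span_columns_fibre_matrix_constant)
    have "x $ rv a = x $ a" for a
      using star[of "rv a" "rho (rv a)"] face[OF face_of_rotated_reverse[OF assms(3)], of a] assms(2)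
      by (simp add: rotation_system_def)
    then have "x $ a = x $ b" for a b
      using constant_if_connected[OF assms(1), where \<phi>="\<lambda>a. x $ a"] star by blast
    then have "x = x $ b *\<^sub>R vec 1" for b
      by (simp add: vec_eq_iff)
    then show "x \<in> span {vec 1}"
      by (metis span_base span_mul singletonI)
  qed
qed

theorem theorem3p1:
  fixes rv :: "'a::finite \<Rightarrow> 'a" and tail :: "'a \<Rightarrow> 'v::finite"
    and rho :: "'a \<Rightarrow> 'a" and fc :: "'a \<Rightarrow> 'f::finite" and l g :: nat
  assumes "simple_arc_graph rv tail"
    and "arc_graph_connected rv tail"
    and "rotation_system tail rho"
    and "face_labelling (face_perm rv rho) fc"
    and "circular_faces tail fc"
    and "CARD('a) = 2 * l"
    and "int CARD('v) - int l + int CARD('f) = 2 - 2 * int g"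
  defines "M \<equiv> arc_face_matrix fc" and "N \<equiv> arc_tail_matrix tail"
    and "U \<equiv> vf_transition_matrix (arc_face_matrix fc) (arc_tail_matrix tail)"
  shows "internal_direct_sum {x. U *v x = x}
            (span (columns M) \<inter> span (columns N))
            ({x. transpose M *v x = 0} \<inter> {x. transpose N *v x = 0})
       \<and> dim {x. U *v x = x} = l + 2 * g
       \<and> span (columns M) \<inter> span (columns N) = span {vec 1}"
proof -
  have M_cols: "orthogonal_nonzero_columns M" and N_cols: "orthogonal_nonzero_columns N"
    using assms(4) surj_tail_if_connected[OF assms(2)]
    by (auto simp: M_def N_def arc_face_matrix_eq_fibre_matrix arc_tail_matrix_eq_fibre_matrix
        face_labelling_def intro: orthogonal_nonzero_columns_fibre_matrix)
  have U_eq: "U = vf_transition_matrix M N"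
    by (simp add: U_def M_def N_def)
  have ones: "span (columns M) \<inter> span (columns N) = span {vec 1}"
    using span_columns_face_tail_Int[OF assms(2-4)]
    by (simp add: M_def N_def arc_face_matrix_eq_fibre_matrix arc_tail_matrix_eq_fibre_matrix)
  have "dim (span {vec 1 :: real^'a}) = 1"
    by (simp add: vec_eq_iff)
  then have "dim {x. U *v x = x} + CARD('f) + CARD('v) = CARD('a) + 2"
    using dim_fixed_vf_transition_matrix[OF M_cols N_cols] by (simp add: U_eq ones)
  then have "dim {x. U *v x = x} = l + 2 * g"
    using assms(6,7) by linarith
  with ones show ?thesis
    using internal_direct_sum_fixed_vf_transition_matrix[OF M_cols N_cols] by (simp add: U_eq)
qed

end
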